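(* Let $X$ be a complex Banach space. Suppose that for every normalized weakly null sequence $(y_n)$ in $X$ there exist a subsequence $(y_{n_k})$ and a sequence $(f_k)$ in $X^*$ biorthogonal to it (i.e. $f_k(y_{n_j})=\delta_{kj}$) such that $(f_k)$ has an (unconditional) spreading model satisfying an upper $p$-estimate for some $p>1$. Then $X$ is $\mathcal{P}$-Schur. If moreover the same $p>1$ works for every such sequence and $N>p'=p/(p-1)$ is an integer, then $X$ is $\mathcal{P}_N$-Schur.
   Context: An $N$-homogeneous analytic polynomial on $X$ is the restriction to the diagonal of a bounded $N$-linear form on $X^N$; $\mathcal{P}_N(X)$ denotes the space of these. $X$ is $\mathcal{P}_N$-Schur if $P(x_n)\to0$ for all $P\in\mathcal{P}_N(X)$ implies $\|x_n\|\to0$; $X$ is $\mathcal{P}$-Schur if $P(x_n)\to 0$ for all $P\in\mathcal{P}_M(X)$ and all $M\ge1$ implies $\|x_n\|\to0$. A sequence $(f_k)$ in a Banach space has a spreading model given by a norm $L$ on the space of finitely supported scalar sequences if for every $\varepsilon>0$ and every finitely supported $a=(a_1,\dots,a_M)$ there is $k$ such that $\left|\,\|\sum_{i=1}^M a_i f_{k_i}\|-L(a)\right|<\varepsilon$ for all $k<k_1<\cdots<k_M$; the spreading model is the completion $F$ of this space under $L$, with unit vectors $e_i$. It is unconditional if $(e_i)$ is an unconditional basis of $F$, and satisfies an upper $p$-estimate if there is $C$ with $L(a)\le C(\sum_i|a_i|^p)^{1/p}$ for all finitely supported $a$. *)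

theory Defs
  imports "HOL-Analysis.Analysis"
begin

class scaleC =
  fixes scaleC :: "complex \<Rightarrow> 'a \<Rightarrow> 'a" (infixr \<open>*\<^sub>C\<close> 75)

class complex_normed_vector = scaleC + real_normed_vector +
  assumes scaleC_add_right: "c *\<^sub>C (x + y) = c *\<^sub>C x + c *\<^sub>C y"
    and scaleC_add_left: "(c + d) *\<^sub>C x = c *\<^sub>C x + d *\<^sub>C x"
    and scaleC_scaleC: "c *\<^sub>C d *\<^sub>C x = (c * d) *\<^sub>C x"
    and scaleC_one: "1 *\<^sub>C x = x"
    and scaleR_scaleC: "r *\<^sub>R x = complex_of_real r *\<^sub>C x"
    and norm_scaleC: "norm (c *\<^sub>C x) = norm c * norm x"

definition cdual :: "('a::complex_normed_vector \<Rightarrow> complex) \<Rightarrow> bool" where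
  "cdual f \<longleftrightarrow> (\<forall>x y. f (x + y) = f x + f y) \<and> (\<forall>c x. f (c *\<^sub>C x) = c * f x)
     \<and> (\<exists>K. \<forall>x. norm (f x) \<le> K * norm x)"

definition dual_norm :: "('a::complex_normed_vector \<Rightarrow> complex) \<Rightarrow> real" where
  "dual_norm f = Sup ((\<lambda>x. norm (f x)) ` {x. norm x \<le> 1})"

definition weakly_null :: "(nat \<Rightarrow> 'a::complex_normed_vector) \<Rightarrow> bool" where
  "weakly_null y \<longleftrightarrow> (\<forall>f. cdual f \<longrightarrow> (\<lambda>n. f (y n)) \<longlonglongrightarrow> 0)"

definition normalized :: "(nat \<Rightarrow> 'a::complex_normed_vector) \<Rightarrow> bool" where
  "normalized y \<longleftrightarrow> (\<forall>n. norm (y n) = 1)"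

text \<open>Bounded N-linear forms on X^N, with arguments v 0, ..., v (N-1)
  (the form ignores the coordinates i >= N).\<close>
definition multilinear_form :: "nat \<Rightarrow> ((nat \<Rightarrow> 'a::complex_normed_vector) \<Rightarrow> complex) \<Rightarrow> bool" where
  "multilinear_form N A \<longleftrightarrow>
     (\<forall>v w. (\<forall>i<N. v i = w i) \<longrightarrow> A v = A w) \<and>
     (\<forall>i<N. \<forall>v x z. A (v(i := x + z)) = A (v(i := x)) + A (v(i := z))) \<and>
     (\<forall>i<N. \<forall>v c x. A (v(i := c *\<^sub>C x)) = c * A (v(i := x))) \<and>
     (\<exists>C. \<forall>v. norm (A v) \<le> C * (\<Prod>i<N. norm (v i)))"

definition hom_poly :: "nat \<Rightarrow> ('a::complex_normed_vector \<Rightarrow> complex) \<Rightarrow> bool" where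
  "hom_poly N P \<longleftrightarrow> (\<exists>A. multilinear_form N A \<and> (\<forall>x. P x = A (\<lambda>_. x)))"

definition P_N_Schur :: "'a::complex_normed_vector itself \<Rightarrow> nat \<Rightarrow> bool" where
  "P_N_Schur _ N \<longleftrightarrow> (\<forall>x::nat \<Rightarrow> 'a.
     (\<forall>P. hom_poly N P \<longrightarrow> (\<lambda>n. P (x n)) \<longlonglongrightarrow> 0) \<longrightarrow> (\<lambda>n. norm (x n)) \<longlonglongrightarrow> 0)"

definition P_Schur :: "'a::complex_normed_vector itself \<Rightarrow> bool" where
  "P_Schur _ \<longleftrightarrow> (\<forall>x::nat \<Rightarrow> 'a.
     (\<forall>M\<ge>1. \<forall>P. hom_poly M P \<longrightarrow> (\<lambda>n. P (x n)) \<longlonglongrightarrow> 0) \<longrightarrow> (\<lambda>n. norm (x n)) \<longlonglongrightarrow> 0)"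

definition fin_supp :: "(nat \<Rightarrow> complex) \<Rightarrow> bool" where
  "fin_supp a \<longleftrightarrow> finite {i. a i \<noteq> 0}"

definition is_norm_c00 :: "((nat \<Rightarrow> complex) \<Rightarrow> real) \<Rightarrow> bool" where
  "is_norm_c00 L \<longleftrightarrow>
     (\<forall>a. fin_supp a \<longrightarrow> (L a = 0 \<longleftrightarrow> a = (\<lambda>_. 0))) \<and>
     (\<forall>a c. fin_supp a \<longrightarrow> L (\<lambda>i. c * a i) = norm c * L a) \<and>
     (\<forall>a b. fin_supp a \<longrightarrow> fin_supp b \<longrightarrow> L (\<lambda>i. a i + b i) \<le> L a + L b)"

text \<open>(f_k) in X* has the spreading model given by the norm L (unit vectors e_0, e_1, ...):
  for every eps > 0 and every a = (a_0,...,a_(M-1)) there is k0 such that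
  | || sum_i a_i f_(k_i) || - L(a) | < eps whenever k0 < k_0 < k_1 < ... .\<close>
definition spreading_model :: "(nat \<Rightarrow> ('a::complex_normed_vector \<Rightarrow> complex)) \<Rightarrow> ((nat \<Rightarrow> complex) \<Rightarrow> real) \<Rightarrow> bool" where
  "spreading_model f L \<longleftrightarrow> is_norm_c00 L \<and>
     (\<forall>\<epsilon>>0. \<forall>M. \<forall>a::nat \<Rightarrow> complex. \<exists>k0. \<forall>ks::nat \<Rightarrow> nat. strict_mono ks \<and> k0 < ks 0 \<longrightarrow>
        \<bar>dual_norm (\<lambda>x. \<Sum>i<M. a i * f (ks i) x) - L (\<lambda>i. if i < M then a i else 0)\<bar> < \<epsilon>)"

definition unconditional_sm :: "((nat \<Rightarrow> complex) \<Rightarrow> real) \<Rightarrow> bool" where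
  "unconditional_sm L \<longleftrightarrow> (\<exists>K. \<forall>a \<sigma>. fin_supp a \<longrightarrow> (\<forall>i. \<sigma> i \<in> {-1, 1::complex}) \<longrightarrow>
      L (\<lambda>i. \<sigma> i * a i) \<le> K * L a)"

definition upper_p_estimate :: "((nat \<Rightarrow> complex) \<Rightarrow> real) \<Rightarrow> real \<Rightarrow> bool" where
  "upper_p_estimate L p \<longleftrightarrow> (\<exists>C. \<forall>a. fin_supp a \<longrightarrow>
      L a \<le> C * (\<Sum>i\<in>{i. a i \<noteq> 0}. norm (a i) powr p) powr (1 / p))"

definition biorth_sm_cond :: "real \<Rightarrow> (nat \<Rightarrow> 'a::complex_normed_vector) \<Rightarrow> bool" where
  "biorth_sm_cond p y \<longleftrightarrow> (\<exists>r f L. strict_mono r \<and> (\<forall>k. cdual (f k)) \<and>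
      (\<forall>k j. f k (y (r j)) = (if k = j then 1 else 0)) \<and>
      spreading_model f L \<and> unconditional_sm L \<and> upper_p_estimate L p)"

end

theory Submission
  imports Defs
begin

text \<open>Suppose \<open>x\<^sub>n\<close> is annihilated in the limit by all homogeneous polynomials, but
  \<open>norm (x\<^sub>n) \<ge> \<delta> > 0\<close> along a subsequence. Powers of functionals are polynomials, so normalizing
  that subsequence gives a normalized weakly null sequence \<open>y\<^sub>n\<close>; take functionals \<open>f\<^sub>k\<close>
  biorthogonal to a subsequence of it. The upper \<open>p\<close>-estimate of their spreading model bounds the
  norm of the sum of the \<open>f\<^sub>k\<close> over a late block \<open>G\<close> by \<open>B |G|\<^sup>1\<^sup>/\<^sup>p\<close>. Applying such sums to \<open>x\<close>,
  over the \<open>k\<close> for which \<open>f\<^sub>k x\<close> lies in a fixed quadrant of the plane, shows that the \<open>m\<close>-th largest of the numbers \<open>|f\<^sub>k x|\<close> is at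
  most \<open>C m\<^sup>1\<^sup>/\<^sup>p\<^sup>-\<^sup>1 norm x\<close>, hence \<open>\<Sum>\<^sub>k |f\<^sub>k x|\<^sup>N \<le> D (norm x)\<^sup>N\<close> once \<open>N (1 - 1/p) > 1\<close>,
  i.e. \<open>N > p/(p - 1)\<close>. So \<open>P = \<Sum>\<^sub>k f\<^sub>k\<^sup>N\<close> is an \<open>N\<close>-homogeneous polynomial with
  \<open>P (t y\<^sub>k) = t\<^sup>N\<close> along the subsequence, and \<open>|P x\<^sub>n| = (norm x\<^sub>n)\<^sup>N \<ge> \<delta>\<^sup>N\<close> there contradicts
  \<open>P x\<^sub>n \<longlonglongrightarrow> 0\<close>.\<close>

section \<open>Bounded linear functionals\<close>

lemma cdual_zero: "cdual f \<Longrightarrow> f 0 = 0"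
  unfolding cdual_def by (metis add_0 add_cancel_right_left)

lemma cdual_scaleR: "cdual f \<Longrightarrow> f (r *\<^sub>R x) = complex_of_real r * f x"
  unfolding cdual_def by (simp add: scaleR_scaleC)

lemma cdual_eq_norm_mult_sgn: "cdual f \<Longrightarrow> f x = complex_of_real (norm x) * f (sgn x)"
proof -
  assume "cdual f"
  moreover have "x = norm x *\<^sub>R sgn x" by (cases "x = 0") (simp_all add: sgn_div_norm)
  ultimately show ?thesis by (metis cdual_scaleR)
qed

lemma cdual_bounded:
  assumes "cdual f" obtains K where "K \<ge> 0" "\<And>x. norm (f x) \<le> K * norm x"
proof -
  obtain K where K: "\<And>x. norm (f x) \<le> K * norm x" using assms unfolding cdual_def by blast
  have "norm (f x) \<le> max K 0 * norm x" for x
    by (metis K max.cobounded1 mult_right_mono norm_ge_zero order_trans)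
  then show ?thesis by (intro that[of "max K 0"]) auto
qed

lemma bdd_above_dual_norm:
  assumes "cdual f" shows "bdd_above ((\<lambda>x. norm (f x)) ` {x. norm x \<le> 1})"
proof -
  obtain K where "K \<ge> 0" "\<And>x. norm (f x) \<le> K * norm x"
    using cdual_bounded[OF assms] by blast
  then show ?thesis unfolding bdd_above_def by (intro exI[of _ K]) (auto intro: order_trans mult_left_le)
qed

lemma dual_norm_nonneg:
  assumes "cdual f" shows "0 \<le> dual_norm f"
proof -
  have "norm (f 0) \<in> (\<lambda>x. norm (f x)) ` {x. norm x \<le> 1}" by (intro imageI) simp
  then show ?thesis
    unfolding dual_norm_def using assms
    by (intro cSup_upper2[of "norm (f 0)"] bdd_above_dual_norm) (auto simp: cdual_zero)
qed

lemma dual_norm_zero: "dual_norm (\<lambda>x::'a::complex_normed_vector. 0) = 0"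
proof -
  have ball: "0 \<in> {x::'a. norm x \<le> 1}" by simp
  show ?thesis unfolding dual_norm_def norm_zero image_constant[OF ball] by simp
qed

lemma norm_le_dual_norm:
  assumes "cdual f" shows "norm (f x) \<le> dual_norm f * norm x"
proof -
  have "norm (f (sgn x)) \<le> dual_norm f"
    unfolding dual_norm_def using assms
    by (intro cSup_upper bdd_above_dual_norm) (auto simp: norm_sgn)
  then show ?thesis
    using cdual_eq_norm_mult_sgn[OF assms, of x]
    by (simp add: norm_mult) (metis mult.commute mult_left_mono norm_ge_zero)
qed

lemma cdual_sum:
  assumes "finite S" "\<And>i. i \<in> S \<Longrightarrow> cdual (g i)"
  shows "cdual (\<lambda>x. \<Sum>i\<in>S. g i x)"
  using assms
proof (induction S rule: finite_induct)
  case empty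
  then show ?case unfolding cdual_def by (simp add: exI[of _ 0])
next
  case (insert a S)
  have IH: "cdual (\<lambda>x. \<Sum>i\<in>S. g i x)" and ga: "cdual (g a)" using insert by auto
  obtain K1 where K1: "\<And>x. norm (\<Sum>i\<in>S. g i x) \<le> K1 * norm x" using IH unfolding cdual_def by blast
  obtain K2 where K2: "\<And>x. norm (g a x) \<le> K2 * norm x" using ga unfolding cdual_def by blast
  have "norm (g a x + (\<Sum>i\<in>S. g i x)) \<le> (K2 + K1) * norm x" for x
    using order_trans[OF norm_triangle_ineq add_mono[OF K2 K1]] by (simp add: distrib_right)
  then have "\<exists>K. \<forall>x. norm (\<Sum>i\<in>insert a S. g i x) \<le> K * norm x"
    using insert(1,2) by auto
  with IH ga insert(1,2) show ?case
    unfolding cdual_def by (auto simp: algebra_simps sum.distrib sum_distrib_left)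
qed

section \<open>Homogeneous polynomials from power-summable functionals\<close>

lemma prod_le_sum_power:
  fixes a :: "nat \<Rightarrow> real"
  assumes "N \<ge> 1" "\<And>i. a i \<ge> 0"
  shows "(\<Prod>i<N. a i) \<le> (\<Sum>j<N. a j ^ N)"
proof -
  have "Max (a ` {..<N}) \<in> a ` {..<N}" using assms(1) by (intro Max_in) (auto simp: lessThan_empty_iff)
  then obtain m where m: "m < N" "a m = Max (a ` {..<N})" by auto
  then have max: "a i \<le> a m" if "i < N" for i using that by simp
  have "(\<Prod>i<N. a i) \<le> (\<Prod>i<N. a m)" using max assms(2) by (intro prod_mono) auto
  also have "\<dots> = a m ^ N" by simp
  also have "\<dots> \<le> (\<Sum>j<N. a j ^ N)" using m assms(2) by (intro member_le_sum) auto
  finally show ?thesis .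
qed

lemma multilinear_form_prod_cdual:
  assumes g: "cdual g"
  shows "multilinear_form N (\<lambda>v. \<Prod>i<N. g (v i))"
proof -
  have rest: "(\<Prod>j\<in>{..<N} - {i}. g ((v(i := x)) j)) = (\<Prod>j\<in>{..<N} - {i}. g (v j))" for i v x
    by (intro prod.cong) auto
  have add: "(\<Prod>j<N. g ((v(i := x + z)) j)) = (\<Prod>j<N. g ((v(i := x)) j)) + (\<Prod>j<N. g ((v(i := z)) j))"
    if "i < N" for i v x z
    using that g rest by (simp add: prod.remove[of "{..<N}" i] cdual_def distrib_right)
  have hom: "(\<Prod>j<N. g ((v(i := c *\<^sub>C x)) j)) = c * (\<Prod>j<N. g ((v(i := x)) j))"
    if "i < N" for i v c x
    using that g rest by (simp add: prod.remove[of "{..<N}" i] cdual_def)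
  obtain K where K: "K \<ge> 0" "\<And>x. norm (g x) \<le> K * norm x" using cdual_bounded[OF g] by blast
  have "norm (\<Prod>i<N. g (v i)) \<le> K ^ N * (\<Prod>i<N. norm (v i))" for v
  proof -
    have "norm (\<Prod>i<N. g (v i)) \<le> (\<Prod>i<N. K * norm (v i))"
      unfolding prod_norm[symmetric] using K by (intro prod_mono) auto
    then show ?thesis by (simp add: prod.distrib)
  qed
  with add hom show ?thesis unfolding multilinear_form_def by auto
qed

lemma multilinear_form_suminf:
  assumes A: "\<And>k. multilinear_form N (A k)" and summable: "\<And>v. summable (\<lambda>k. A k v)"
    and bound: "\<And>v. norm (\<Sum>k. A k v) \<le> C * (\<Prod>i<N. norm (v i))"
  shows "multilinear_form N (\<lambda>v. \<Sum>k. A k v)"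
proof -
  have "(\<Sum>k. A k (v(i := x + z))) = (\<Sum>k. A k (v(i := x))) + (\<Sum>k. A k (v(i := z)))"
    if "i < N" for i v x z
    using that A suminf_add[OF summable summable] unfolding multilinear_form_def by simp
  moreover have "(\<Sum>k. A k (v(i := c *\<^sub>C x))) = c * (\<Sum>k. A k (v(i := x)))"
    if "i < N" for i v c x
    using that A suminf_mult[OF summable] unfolding multilinear_form_def by simp
  moreover have "(\<Sum>k. A k v) = (\<Sum>k. A k w)" if "\<forall>i<N. v i = w i" for v w
  proof -
    have "A k v = A k w" for k using that A unfolding multilinear_form_def by blast
    then show ?thesis by simp
  qed
  ultimately show ?thesis unfolding multilinear_form_def using bound by blast
qed

lemma hom_poly_power_cdual: "cdual f \<Longrightarrow> hom_poly N (\<lambda>x. f x ^ N)"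
  unfolding hom_poly_def by (intro exI[of _ "\<lambda>v. \<Prod>i<N. f (v i)"]) (simp add: multilinear_form_prod_cdual)

lemma norm_prod_cdual_le:
  assumes "cdual g" "N \<ge> 1"
  shows "norm (\<Prod>i<N. g (v i)) \<le> (\<Prod>i<N. norm (v i)) * (\<Sum>j<N. norm (g (sgn (v j))) ^ N)"
proof -
  have "norm (g (v i)) = norm (v i) * norm (g (sgn (v i)))" for i
    by (subst cdual_eq_norm_mult_sgn[OF assms(1)]) (simp add: norm_mult)
  then have "norm (\<Prod>i<N. g (v i)) = (\<Prod>i<N. norm (v i)) * (\<Prod>i<N. norm (g (sgn (v i))))"
    by (simp add: prod_norm[symmetric] prod.distrib)
  also have "\<dots> \<le> (\<Prod>i<N. norm (v i)) * (\<Sum>j<N. norm (g (sgn (v j))) ^ N)"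
    using assms(2) by (intro mult_left_mono prod_le_sum_power prod_nonneg) auto
  finally show ?thesis .
qed

lemma suminf_prod_cdual_bound:
  assumes g: "\<And>k. cdual (g k)" and N: "N \<ge> 1"
    and summable: "\<And>x. summable (\<lambda>k. norm (g k x) ^ N)"
    and bound: "\<And>x. (\<Sum>k. norm (g k x) ^ N) \<le> D * norm x ^ N"
  shows "summable (\<lambda>k. norm (\<Prod>i<N. g k (v i)))"
    and "norm (\<Sum>k. \<Prod>i<N. g k (v i)) \<le> (N * \<bar>D\<bar>) * (\<Prod>i<N. norm (v i))"
proof -
  define Q where "Q = (\<Prod>i<N. norm (v i))"
  have sum_sgn: "summable (\<lambda>k. \<Sum>j<N. norm (g k (sgn (v j))) ^ N)"
    using summable by (intro summable_sum) auto
  have le: "norm (\<Prod>i<N. g k (v i)) \<le> Q * (\<Sum>j<N. norm (g k (sgn (v j))) ^ N)" for k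
    unfolding Q_def using norm_prod_cdual_le[OF g N] .
  show summable_prod: "summable (\<lambda>k. norm (\<Prod>i<N. g k (v i)))"
    by (rule summable_comparison_test'[OF summable_mult[OF sum_sgn, of Q]]) (use le in auto)
  have "norm (\<Sum>k. \<Prod>i<N. g k (v i)) \<le> (\<Sum>k. norm (\<Prod>i<N. g k (v i)))"
    by (rule summable_norm[OF summable_prod])
  also have "\<dots> \<le> (\<Sum>k. Q * (\<Sum>j<N. norm (g k (sgn (v j))) ^ N))"
    by (intro suminf_le summable_prod summable_mult sum_sgn le)
  also have "\<dots> = Q * (\<Sum>j<N. \<Sum>k. norm (g k (sgn (v j))) ^ N)"
    using sum_sgn summable by (simp add: suminf_mult suminf_sum)
  also have "\<dots> \<le> Q * (\<Sum>j<N. \<bar>D\<bar>)"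
  proof (intro mult_left_mono sum_mono)
    fix j
    have "D * norm (sgn (v j)) ^ N \<le> \<bar>D\<bar>" using N by (simp add: norm_sgn zero_power abs_ge_self)
    then show "(\<Sum>k. norm (g k (sgn (v j))) ^ N) \<le> \<bar>D\<bar>" using bound[of "sgn (v j)"] by linarith
  qed (simp add: Q_def prod_nonneg)
  also have "\<dots> = (N * \<bar>D\<bar>) * (\<Prod>i<N. norm (v i))"
    unfolding Q_def by simp
  finally show "norm (\<Sum>k. \<Prod>i<N. g k (v i)) \<le> (N * \<bar>D\<bar>) * (\<Prod>i<N. norm (v i))" .
qed

lemma hom_poly_suminf_power:
  assumes g: "\<And>k. cdual (g k)" and N: "N \<ge> 1"
    and summable: "\<And>x. summable (\<lambda>k. norm (g k x) ^ N)"
    and bound: "\<And>x. (\<Sum>k. norm (g k x) ^ N) \<le> D * norm x ^ N"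
  shows "hom_poly N (\<lambda>x. \<Sum>k. g k x ^ N)"
proof -
  have "multilinear_form N (\<lambda>v. \<Sum>k. \<Prod>i<N. g k (v i))"
    by (rule multilinear_form_suminf[OF multilinear_form_prod_cdual[OF g]
          summable_norm_cancel[OF suminf_prod_cdual_bound(1)[OF assms]]
          suminf_prod_cdual_bound(2)[OF assms]])
  moreover have "(\<Sum>k. g k x ^ N) = (\<Sum>k. \<Prod>i<N. g k x)" for x by simp
  ultimately show ?thesis unfolding hom_poly_def by blast
qed

section \<open>Weakly null sequences\<close>

lemma tendsto_zero_if_power_tendsto_zero:
  fixes z :: "nat \<Rightarrow> 'a::real_normed_div_algebra"
  assumes "(\<lambda>n. z n ^ N) \<longlonglongrightarrow> 0" "N \<ge> 1"
  shows "z \<longlonglongrightarrow> 0"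
proof -
  have "(\<lambda>n. root N (norm (z n) ^ N)) \<longlonglongrightarrow> root N 0"
    using tendsto_norm_zero[OF assms(1)] by (intro tendsto_real_root) (simp add: norm_power)
  then have "(\<lambda>n. norm (z n)) \<longlonglongrightarrow> 0" using assms(2) by (simp add: real_root_power_cancel)
  then show ?thesis by (rule tendsto_norm_zero_cancel)
qed

lemma weakly_null_if_poly_null:
  assumes "N \<ge> 1" "\<forall>P. hom_poly N P \<longrightarrow> (\<lambda>n. P (x n)) \<longlonglongrightarrow> 0"
  shows "weakly_null x"
  unfolding weakly_null_def
proof (intro allI impI)
  fix f :: "'a \<Rightarrow> complex" assume "cdual f"
  then have "hom_poly N (\<lambda>x. f x ^ N)" by (rule hom_poly_power_cdual)
  from assms(2)[rule_format, OF this] have "(\<lambda>n. f (x n) ^ N) \<longlonglongrightarrow> 0" .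
  then show "(\<lambda>n. f (x n)) \<longlonglongrightarrow> 0" using assms(1) by (rule tendsto_zero_if_power_tendsto_zero)
qed

lemma weakly_null_subseq:
  assumes "weakly_null x" "strict_mono t" shows "weakly_null (\<lambda>n. x (t n))"
  unfolding weakly_null_def
proof (intro allI impI)
  fix f :: "'a \<Rightarrow> complex" assume "cdual f"
  then have "(\<lambda>n. f (x n)) \<longlonglongrightarrow> 0" using assms(1) unfolding weakly_null_def by blast
  from LIMSEQ_subseq_LIMSEQ[OF this assms(2)] show "(\<lambda>n. f (x (t n))) \<longlonglongrightarrow> 0"
    by (simp add: o_def)
qed

lemma weakly_null_scaleR_bounded:
  assumes x: "weakly_null x" and c: "\<And>n. \<bar>c n\<bar> \<le> K"
  shows "weakly_null (\<lambda>n. c n *\<^sub>R x n)"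
  unfolding weakly_null_def
proof (intro allI impI)
  fix f :: "'a \<Rightarrow> complex" assume f: "cdual f"
  have "(\<lambda>n. f (x n)) \<longlonglongrightarrow> 0" using x f unfolding weakly_null_def by blast
  from tendsto_mult[OF tendsto_const tendsto_norm_zero[OF this], of K]
  have lim: "(\<lambda>n. K * norm (f (x n))) \<longlonglongrightarrow> 0" by simp
  have "norm (f (c n *\<^sub>R x n)) \<le> K * norm (f (x n))" for n
  proof -
    have "norm (f (c n *\<^sub>R x n)) = \<bar>c n\<bar> * norm (f (x n))"
      by (simp add: cdual_scaleR[OF f] norm_mult)
    also have "\<dots> \<le> K * norm (f (x n))" by (rule mult_right_mono[OF c]) simp
    finally show ?thesis .
  qed
  then show "(\<lambda>n. f (c n *\<^sub>R x n)) \<longlonglongrightarrow> 0"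
    by (intro Lim_null_comparison[OF always_eventually lim]) blast
qed

lemma subseq_bounded_below_if_not_null:
  fixes x :: "nat \<Rightarrow> 'a::real_normed_vector"
  assumes "\<not> (\<lambda>n. norm (x n)) \<longlonglongrightarrow> 0"
  obtains \<delta> and t :: "nat \<Rightarrow> nat" where "\<delta> > 0" "strict_mono t" "\<And>n. \<delta> \<le> norm (x (t n))"
proof -
  obtain \<delta> where \<delta>: "\<delta> > 0" "\<not> eventually (\<lambda>n. norm (x n) < \<delta>) sequentially"
    using assms unfolding tendsto_iff by auto
  obtain t :: "nat \<Rightarrow> nat" where "strict_mono t" "\<forall>n. \<not> norm (x (t n)) < \<delta>"
    using not_eventually_sequentiallyD[OF \<delta>(2)] by auto
  then show ?thesis using \<delta>(1) by (intro that[of \<delta> t]) (auto simp: not_less)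
qed

section \<open>Upper estimates on late blocks\<close>

text \<open>A spreading model only controls blocks that start beyond an index depending on their length.
  Along a fast subsequence this becomes a bound on all blocks \<open>G \<subseteq> {h..}\<close> with
  \<open>card G \<le> 2h + 1\<close>. This class is chosen because the elements \<open>\<ge> card G div 2\<close> of any finite
  set \<open>G\<close> form such a block, and they are at least half of \<open>G\<close>.\<close>

locale late_block_upper_estimate =
  fixes \<phi> :: "nat \<Rightarrow> 'a::complex_normed_vector \<Rightarrow> complex" and B p :: real
  assumes cdual: "\<And>k. cdual (\<phi> k)"
    and p_pos: "0 < p"
    and block_bound: "\<And>G h. finite G \<Longrightarrow> G \<subseteq> {h..} \<Longrightarrow> card G \<le> 2 * h + 1 \<Longrightarrow>
      dual_norm (\<lambda>x. \<Sum>k\<in>G. \<phi> k x) \<le> B * real (card G) powr (1 / p)"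
begin

lemma B_nonneg: "0 \<le> B"
  using block_bound[of "{0}" 0] dual_norm_nonneg[OF cdual[of 0]] by simp

lemma card_mult_le_if_Re_ge:
  assumes c: "norm c = 1" and G: "finite G" and v: "0 \<le> v"
    and Re_ge: "\<And>k. k \<in> G \<Longrightarrow> v \<le> Re (c * \<phi> k x)"
  shows "real (card G) * v \<le> 2 * B * real (card G) powr (1 / p) * norm x"
proof -
  define h where "h = card G div 2"
  define G' where "G' = {k\<in>G. h \<le> k}"
  have G': "finite G'" "G' \<subseteq> G" "G' \<subseteq> {h..}" unfolding G'_def using G by auto
  have "G = G' \<union> (G \<inter> {..<h})" unfolding G'_def by auto
  then have "card G \<le> card G' + card (G \<inter> {..<h})" by (metis card_Un_le)
  also have "card (G \<inter> {..<h}) \<le> h" using card_mono[of "{..<h}" "G \<inter> {..<h}"] by auto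
  finally have half: "card G \<le> 2 * card G'" unfolding h_def by linarith
  have small: "card G' \<le> card G" using card_mono[OF G G'(2)] by auto
  have "real (card G') * v = (\<Sum>k\<in>G'. v)" by simp
  also have "\<dots> \<le> (\<Sum>k\<in>G'. Re (c * \<phi> k x))" using Re_ge G'(2) by (intro sum_mono) auto
  also have "\<dots> = Re (c * (\<Sum>k\<in>G'. \<phi> k x))" by (simp add: sum_distrib_left)
  also have "\<dots> \<le> norm (\<Sum>k\<in>G'. \<phi> k x)"
    using complex_Re_le_cmod[of "c * (\<Sum>k\<in>G'. \<phi> k x)"] c by (simp add: norm_mult)
  also have "\<dots> \<le> dual_norm (\<lambda>x. \<Sum>k\<in>G'. \<phi> k x) * norm x"
    using G'(1) cdual by (intro norm_le_dual_norm cdual_sum)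
  also have "\<dots> \<le> B * real (card G') powr (1 / p) * norm x"
    using G' small unfolding h_def by (intro mult_right_mono block_bound) auto
  also have "\<dots> \<le> B * real (card G) powr (1 / p) * norm x"
    using small p_pos B_nonneg by (intro mult_right_mono mult_left_mono powr_mono2) auto
  finally have "real (card G') * v \<le> B * real (card G) powr (1 / p) * norm x" .
  moreover have "real (card G) * v \<le> 2 * real (card G') * v"
    using half v by (intro mult_right_mono) linarith+
  ultimately show ?thesis by simp
qed

lemma card_mult_le_if_norm_ge:
  assumes F: "finite F" and v: "0 \<le> v" and norm_ge: "\<And>k. k \<in> F \<Longrightarrow> v \<le> norm (\<phi> k x)"
  shows "real (card F) * v \<le> 16 * B * real (card F) powr (1 / p) * norm x"
proof -
  define U :: "complex set" where "U = {1, -1, \<i>, -\<i>}"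
  define Q where "Q c = {k\<in>F. v / 2 \<le> Re (c * \<phi> k x)}" for c
  have card_U: "card U = 4" unfolding U_def by (simp add: complex_eq_iff)
  have "F \<subseteq> (\<Union>c\<in>U. Q c)"
  proof
    fix k assume k: "k \<in> F"
    have "v \<le> \<bar>Re (\<phi> k x)\<bar> + \<bar>Im (\<phi> k x)\<bar>" using norm_ge[OF k] cmod_le[of "\<phi> k x"] by linarith
    then show "k \<in> (\<Union>c\<in>U. Q c)" using k unfolding U_def Q_def by auto
  qed
  then have "card F \<le> (\<Sum>c\<in>U. card (Q c))"
    using F by (intro order_trans[OF card_mono card_UN_le]) (auto simp: U_def Q_def)
  then have "real (card F) \<le> (\<Sum>c\<in>U. real (card (Q c)))" by (simp flip: of_nat_sum)
  then have "real (card F) * (v / 2) \<le> (\<Sum>c\<in>U. real (card (Q c)) * (v / 2))"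
    unfolding sum_distrib_right[symmetric] using v by (intro mult_right_mono) auto
  also have "\<dots> \<le> (\<Sum>c\<in>U. 2 * B * real (card F) powr (1 / p) * norm x)"
  proof (intro sum_mono)
    fix c assume "c \<in> U"
    then have "real (card (Q c)) * (v / 2) \<le> 2 * B * real (card (Q c)) powr (1 / p) * norm x"
      using F v unfolding U_def by (intro card_mult_le_if_Re_ge[where c = c]) (auto simp: Q_def)
    also have "\<dots> \<le> 2 * B * real (card F) powr (1 / p) * norm x"
      using F p_pos B_nonneg
      by (intro mult_right_mono mult_left_mono powr_mono2 of_nat_mono card_mono) (auto simp: Q_def)
    finally show "real (card (Q c)) * (v / 2) \<le> 2 * B * real (card F) powr (1 / p) * norm x" .
  qed
  also have "\<dots> = 8 * B * real (card F) powr (1 / p) * norm x"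
    using card_U by simp
  finally show ?thesis by simp
qed

lemma sum_norm_power_le:
  assumes "finite F"
  shows "(\<Sum>k\<in>F. norm (\<phi> k x) ^ N)
    \<le> (16 * B * norm x) ^ N * (\<Sum>j=1..card F. real j powr (N * (1 / p - 1)))"
  using assms
proof (induction "card F" arbitrary: F)
  case 0
  then show ?case by simp
next
  case (Suc n)
  define m where "m = card F"
  have "F \<noteq> {}" using Suc.hyps(2) by auto
  then have "Min ((\<lambda>k. norm (\<phi> k x)) ` F) \<in> (\<lambda>k. norm (\<phi> k x)) ` F"
    using Suc.prems by (intro Min_in) auto
  then obtain k0 where k0_in: "k0 \<in> F" and "norm (\<phi> k0 x) = Min ((\<lambda>k. norm (\<phi> k x)) ` F)"
    by auto
  then have k0: "k0 \<in> F" "\<And>k. k \<in> F \<Longrightarrow> norm (\<phi> k0 x) \<le> norm (\<phi> k x)"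
    using Suc.prems by auto
  have "real m * norm (\<phi> k0 x) \<le> 16 * B * real m powr (1 / p) * norm x"
    unfolding m_def using Suc.prems k0(2) by (intro card_mult_le_if_norm_ge) auto
  then have "norm (\<phi> k0 x) \<le> 16 * B * norm x * (real m powr (1 / p) / real m)"
    using Suc.hyps(2) by (simp add: m_def field_simps)
  also have "real m powr (1 / p) / real m = real m powr (1 / p - 1)"
    using Suc.hyps(2) by (simp add: m_def powr_diff)
  finally have "norm (\<phi> k0 x) ^ N \<le> (16 * B * norm x * real m powr (1 / p - 1)) ^ N"
    by (intro power_mono) auto
  also have "\<dots> = (16 * B * norm x) ^ N * real m powr (N * (1 / p - 1))"
    using Suc.hyps(2) by (simp add: m_def power_mult_distrib powr_power)
  finally have last: "norm (\<phi> k0 x) ^ N \<le> (16 * B * norm x) ^ N * real m powr (N * (1 / p - 1))" .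
  have rest: "(\<Sum>k\<in>F - {k0}. norm (\<phi> k x) ^ N)
      \<le> (16 * B * norm x) ^ N * (\<Sum>j=1..n. real j powr (N * (1 / p - 1)))"
    using Suc.hyps Suc.prems k0(1) by (metis card_Diff_singleton diff_Suc_1 finite_Diff)
  have "(\<Sum>k\<in>F. norm (\<phi> k x) ^ N) = norm (\<phi> k0 x) ^ N + (\<Sum>k\<in>F - {k0}. norm (\<phi> k x) ^ N)"
    using Suc.prems k0(1) by (simp add: sum.remove)
  also have "\<dots> \<le> (16 * B * norm x) ^ N * real m powr (N * (1 / p - 1))
      + (16 * B * norm x) ^ N * (\<Sum>j=1..n. real j powr (N * (1 / p - 1)))"
    by (rule add_mono[OF last rest])
  also have "\<dots> = (16 * B * norm x) ^ N * (\<Sum>j=1..Suc n. real j powr (N * (1 / p - 1)))"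
    unfolding m_def Suc.hyps(2)[symmetric] by (simp add: sum.cl_ivl_Suc distrib_left)
  finally show ?case using Suc.hyps(2) by simp
qed

lemma summable_norm_power:
  assumes "real N * (1 - 1 / p) > 1"
  obtains D where "\<And>x. summable (\<lambda>k. norm (\<phi> k x) ^ N)"
    and "\<And>x. (\<Sum>k. norm (\<phi> k x) ^ N) \<le> D * norm x ^ N"
proof -
  define w where "w j = real j powr (N * (1 / p - 1))" for j :: nat
  have "N * (1 / p - 1) < -1" using assms by (simp add: algebra_simps)
  then have w: "summable w" unfolding w_def using summable_real_powr_iff by blast
  define D where "D = (16 * B) ^ N * suminf w"
  have partial: "(\<Sum>k<n. norm (\<phi> k x) ^ N) \<le> D * norm x ^ N" for x n
  proof -
    have "(\<Sum>k<n. norm (\<phi> k x) ^ N) \<le> (16 * B * norm x) ^ N * (\<Sum>j=1..n. w j)"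
      using sum_norm_power_le[of "{..<n}" x N] unfolding w_def by simp
    also have "\<dots> \<le> (16 * B * norm x) ^ N * suminf w"
      using B_nonneg by (intro mult_left_mono sum_le_suminf w) (auto simp: w_def)
    finally show ?thesis by (simp add: D_def power_mult_distrib mult_ac)
  qed
  show ?thesis
  proof
    show summable: "summable (\<lambda>k. norm (\<phi> k x) ^ N)" for x
      by (rule summableI_nonneg_bounded[OF _ partial]) auto
    show "(\<Sum>k. norm (\<phi> k x) ^ N) \<le> D * norm x ^ N" for x
      by (rule suminf_le_const[OF summable partial])
  qed
qed

end

section \<open>Spreading models with an upper \<open>p\<close>-estimate\<close>

lemma strict_mono_onto_finite:
  fixes G :: "nat set"
  assumes G: "finite G"
  obtains ks :: "nat \<Rightarrow> nat" where "strict_mono ks" "ks ` {..<card G} = G"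
proof
  define ks where "ks i = (if i < card G then enumerate G i else Max G + 1 + i)" for i
  show "strict_mono ks"
  proof (rule strict_monoI)
    fix i j :: nat assume ij: "i < j"
    show "ks i < ks j"
    proof (cases "j < card G")
      case True
      then show ?thesis unfolding ks_def using ij G by (simp add: finite_enumerate_mono)
    next
      case False
      have "i < card G \<Longrightarrow> enumerate G i \<le> Max G" using G by (simp add: finite_enumerate_in_set)
      then show ?thesis unfolding ks_def using ij False by auto
    qed
  qed
  have "bij_betw (enumerate G) {..<card G} G" by (rule finite_bij_enumerate[OF G])
  then show "ks ` {..<card G} = G" unfolding ks_def bij_betw_def by auto
qed

lemma spreading_model_block_sum_lt:
  assumes "spreading_model f L"
  obtains k0 :: "nat \<Rightarrow> nat" where "\<And>G. finite G \<Longrightarrow> G \<noteq> {} \<Longrightarrow> G \<subseteq> {k0 (card G)<..} \<Longrightarrow>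
    dual_norm (\<lambda>x. \<Sum>k\<in>G. f k x) < L (\<lambda>i. if i < card G then 1 else 0) + 1"
proof -
  have "\<exists>k. \<forall>ks. strict_mono ks \<and> k < ks 0 \<longrightarrow>
      \<bar>dual_norm (\<lambda>x. \<Sum>i<m. f (ks i) x) - L (\<lambda>i. if i < m then 1 else 0)\<bar> < 1" for m
    using assms unfolding spreading_model_def
    by (elim conjE allE[of _ "1::real"] impE allE[of _ m] allE[of _ "\<lambda>_. 1::complex"]) simp_all
  then obtain k0 where k0: "\<And>m ks. strict_mono ks \<Longrightarrow> k0 m < ks 0 \<Longrightarrow>
      \<bar>dual_norm (\<lambda>x. \<Sum>i<m. f (ks i) x) - L (\<lambda>i. if i < m then 1 else 0)\<bar> < 1"
    by metis
  show ?thesis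
  proof
    fix G assume G: "finite G" "G \<noteq> {}" "G \<subseteq> {k0 (card G)<..}"
    obtain ks where ks: "strict_mono ks" "ks ` {..<card G} = G"
      using strict_mono_onto_finite[OF G(1)] .
    have "ks 0 \<in> G" using ks(2) G(1,2) by (metis card_gt_0_iff imageI lessThan_iff)
    then have "k0 (card G) < ks 0" using G(3) by auto
    moreover have "(\<Sum>i<card G. f (ks i) x) = (\<Sum>k\<in>G. f k x)" for x
      using sum.reindex[of ks "{..<card G}" "\<lambda>k. f k x"] strict_mono_imp_inj_on[OF ks(1)] ks(2)
      by simp
    ultimately show "dual_norm (\<lambda>x. \<Sum>k\<in>G. f k x) < L (\<lambda>i. if i < card G then 1 else 0) + 1"
      using k0[OF ks(1)] by fastforce
  qed
qed

lemma upper_p_estimate_const: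
  assumes "upper_p_estimate L p"
  obtains C where "\<And>m. L (\<lambda>i. if i < m then 1 else 0) \<le> C * real m powr (1 / p)"
proof -
  obtain C where C: "\<And>a. fin_supp a \<Longrightarrow> L a \<le> C * (\<Sum>i\<in>{i. a i \<noteq> 0}. norm (a i) powr p) powr (1 / p)"
    using assms unfolding upper_p_estimate_def by blast
  have "L (\<lambda>i. if i < m then 1 else 0) \<le> C * real m powr (1 / p)" for m
  proof -
    have supp: "{i. (if i < m then 1 else 0 :: complex) \<noteq> 0} = {..<m}" by auto
    then have "fin_supp (\<lambda>i. if i < m then 1 else 0)" unfolding fin_supp_def by simp
    from C[OF this] show ?thesis unfolding supp by simp
  qed
  then show ?thesis by (rule that)
qed

lemma exists_strict_mono_gt:
  fixes b :: "nat \<Rightarrow> nat"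
  obtains s :: "nat \<Rightarrow> nat" where "strict_mono s" "\<And>j. b j < s j"
proof
  define s where "s j = (\<Sum>i\<le>j. b i) + j + 1" for j
  show "strict_mono s" unfolding s_def by (rule strict_monoI_Suc) simp
  show "b j < s j" for j unfolding s_def using member_le_sum[of j "{..j}" b] by simp
qed

lemma spreading_model_block_sum_le_powr:
  assumes sm: "spreading_model f L" and up: "upper_p_estimate L p" and p: "0 < p"
  obtains k0 :: "nat \<Rightarrow> nat" and B where "\<And>G. finite G \<Longrightarrow> G \<noteq> {} \<Longrightarrow> G \<subseteq> {k0 (card G)<..} \<Longrightarrow>
    dual_norm (\<lambda>x. \<Sum>k\<in>G. f k x) \<le> B * real (card G) powr (1 / p)"
proof -
  obtain k0 where k0: "\<And>G. finite G \<Longrightarrow> G \<noteq> {} \<Longrightarrow> G \<subseteq> {k0 (card G)<..} \<Longrightarrow>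
      dual_norm (\<lambda>x. \<Sum>k\<in>G. f k x) < L (\<lambda>i. if i < card G then 1 else 0) + 1"
    using spreading_model_block_sum_lt[OF sm] by blast
  obtain C where C: "\<And>m. L (\<lambda>i. if i < m then 1 else 0) \<le> C * real m powr (1 / p)"
    using upper_p_estimate_const[OF up] by blast
  have "dual_norm (\<lambda>x. \<Sum>k\<in>G. f k x) \<le> (\<bar>C\<bar> + 1) * real (card G) powr (1 / p)"
    if G: "finite G" "G \<noteq> {}" "G \<subseteq> {k0 (card G)<..}" for G
  proof -
    have "1 \<le> real (card G) powr (1 / p)"
      using G p by (intro ge_one_powr_ge_zero) (auto simp: Suc_le_eq card_gt_0_iff)
    moreover have "C * real (card G) powr (1 / p) \<le> \<bar>C\<bar> * real (card G) powr (1 / p)"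
      by (intro mult_right_mono) auto
    ultimately show ?thesis using k0[OF G] C[of "card G"] by (simp add: distrib_right)
  qed
  then show ?thesis by (rule that)
qed

lemma spreading_model_late_block_upper_estimate:
  assumes f: "\<And>k. cdual (f k)" and sm: "spreading_model f L"
    and up: "upper_p_estimate L p" and p: "0 < p"
  obtains s B where "strict_mono s" "late_block_upper_estimate (\<lambda>k. f (s k)) B p"
proof -
  obtain k0 B where k0: "\<And>G. finite G \<Longrightarrow> G \<noteq> {} \<Longrightarrow> G \<subseteq> {k0 (card G)<..} \<Longrightarrow>
      dual_norm (\<lambda>x. \<Sum>k\<in>G. f k x) \<le> B * real (card G) powr (1 / p)"
    using spreading_model_block_sum_le_powr[OF sm up p] by blast
  obtain s :: "nat \<Rightarrow> nat" where s: "strict_mono s" "\<And>h. Max (k0 ` {..2 * h + 1}) < s h"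
    using exists_strict_mono_gt[of "\<lambda>h. Max (k0 ` {..2 * h + 1})"] by blast
  have "late_block_upper_estimate (\<lambda>k. f (s k)) B p"
  proof
    fix G h assume G: "finite G" "G \<subseteq> {h..}" "card G \<le> 2 * h + 1"
    show "dual_norm (\<lambda>x. \<Sum>k\<in>G. f (s k) x) \<le> B * real (card G) powr (1 / p)"
    proof (cases "G = {}")
      case True
      then show ?thesis by (simp add: dual_norm_zero)
    next
      case False
      have inj: "inj_on s G" using strict_mono_imp_inj_on[OF s(1)] .
      have "k0 (card G) < s k" if "k \<in> G" for k
      proof -
        have "k0 (card G) \<le> Max (k0 ` {..2 * h + 1})" using G(3) by (intro Max_ge) auto
        also have "\<dots> < s h" by (rule s(2))
        also have "s h \<le> s k" using G(2) that s(1) by (auto simp: strict_mono_less_eq)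
        finally show ?thesis .
      qed
      then have "dual_norm (\<lambda>x. \<Sum>l\<in>s ` G. f l x) \<le> B * real (card G) powr (1 / p)"
        using k0[of "s ` G"] G(1) False by (auto simp: card_image[OF inj])
      then show ?thesis by (simp add: sum.reindex[OF inj])
    qed
  qed (use f p in auto)
  with s(1) show ?thesis using that by blast
qed

section \<open>Polynomials norming a subsequence\<close>

definition norming_on_subseq :: "nat \<Rightarrow> ('a::complex_normed_vector \<Rightarrow> complex) \<Rightarrow> (nat \<Rightarrow> 'a) \<Rightarrow> bool" where
  "norming_on_subseq N P y \<longleftrightarrow>
     (\<exists>r :: nat \<Rightarrow> nat. strict_mono r \<and> (\<forall>j t. P (t *\<^sub>R y (r j)) = complex_of_real (t ^ N)))"

lemma one_le_if_conjugate_exponent_less: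
  assumes "1 < p" "p / (p - 1) < real N" shows "1 \<le> N"
proof -
  have "0 < p / (p - 1)" using assms(1) by simp
  then show ?thesis using assms(2) by linarith
qed

lemma hom_poly_norming_on_subseq:
  assumes p: "1 < p" and N: "p / (p - 1) < real N" and y: "biorth_sm_cond p y"
  obtains P where "hom_poly N P" "norming_on_subseq N P y"
proof -
  obtain r f L where r: "strict_mono r" and f: "\<And>k. cdual (f k)"
    and biorth: "\<And>k j. f k (y (r j)) = (if k = j then 1 else 0)"
    and sm: "spreading_model f L" and up: "upper_p_estimate L p"
    using y unfolding biorth_sm_cond_def by blast
  obtain s B where s: "strict_mono s" and est: "late_block_upper_estimate (\<lambda>k. f (s k)) B p"
    using spreading_model_late_block_upper_estimate[OF f sm up] p by auto
  have "real N * (1 - 1 / p) > 1" using N p by (simp add: field_simps)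
  then obtain D where summable: "\<And>x. summable (\<lambda>k. norm (f (s k) x) ^ N)"
    and bound: "\<And>x. (\<Sum>k. norm (f (s k) x) ^ N) \<le> D * norm x ^ N"
    using late_block_upper_estimate.summable_norm_power[OF est] by blast
  have N1: "N \<ge> 1" using one_le_if_conjugate_exponent_less[OF p N] .
  define P where "P x = (\<Sum>k. f (s k) x ^ N)" for x
  have "hom_poly N P" unfolding P_def using hom_poly_suminf_power[OF f N1 summable bound] .
  moreover have "P (t *\<^sub>R y (r (s j))) = complex_of_real (t ^ N)" for j t
  proof -
    have "f (s k) (t *\<^sub>R y (r (s j))) ^ N = (if k = j then complex_of_real (t ^ N) else 0)" for k
      using N1 by (simp add: cdual_scaleR[OF f] biorth strict_mono_eq[OF s] zero_power)
    then show ?thesis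
      unfolding P_def using sums_unique[OF sums_single[of j "\<lambda>_. complex_of_real (t ^ N)"]] by simp
  qed
  then have "norming_on_subseq N P y"
    unfolding norming_on_subseq_def using strict_mono_o[OF r s] by (intro exI[of _ "r \<circ> s"]) simp
  ultimately show ?thesis by (rule that)
qed

lemma norm_tendsto_zero_if_norming_polys:
  assumes x: "weakly_null x"
    and poly: "\<And>y. normalized y \<Longrightarrow> weakly_null y \<Longrightarrow>
      \<exists>N P. hom_poly N P \<and> norming_on_subseq N P y \<and> (\<lambda>n. P (x n)) \<longlonglongrightarrow> 0"
  shows "(\<lambda>n. norm (x n)) \<longlonglongrightarrow> 0"
proof (rule ccontr)
  assume "\<not> (\<lambda>n. norm (x n)) \<longlonglongrightarrow> 0"
  then obtain \<delta> and t :: "nat \<Rightarrow> nat" where \<delta>: "\<delta> > 0" and t: "strict_mono t" and ge: "\<And>n. \<delta> \<le> norm (x (t n))"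
    using subseq_bounded_below_if_not_null by blast
  define y where "y n = sgn (x (t n))" for n
  have nonzero: "x (t n) \<noteq> 0" for n using ge[of n] \<delta> by auto
  have "normalized y" unfolding normalized_def y_def using nonzero by (simp add: norm_sgn)
  moreover have "weakly_null y"
  proof -
    have "\<bar>1 / norm (x (t n))\<bar> \<le> 1 / \<delta>" for n using ge[of n] \<delta> by (simp add: frac_le)
    from weakly_null_scaleR_bounded[OF weakly_null_subseq[OF x t] this]
    show ?thesis unfolding y_def by (simp add: sgn_div_norm divide_inverse_commute)
  qed
  ultimately obtain N P and r :: "nat \<Rightarrow> nat" where P_null: "(\<lambda>n. P (x n)) \<longlonglongrightarrow> 0" and r: "strict_mono r"
    and norming: "\<And>j t. P (t *\<^sub>R y (r j)) = complex_of_real (t ^ N)"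
    using poly unfolding norming_on_subseq_def by blast
  have "P (x (t (r j))) = complex_of_real (norm (x (t (r j))) ^ N)" for j
    using norming[of "norm (x (t (r j)))" j] by (simp add: y_def sgn_div_norm nonzero)
  then have "(\<lambda>j. norm (x (t (r j))) ^ N) \<longlonglongrightarrow> 0"
    using tendsto_norm_zero[OF LIMSEQ_subseq_LIMSEQ[OF P_null strict_mono_o[OF t r]]]
    by (simp add: o_def norm_power)
  moreover have "\<delta> ^ N \<le> norm (x (t (r j))) ^ N" for j using ge \<delta> by (intro power_mono) auto
  ultimately have "\<delta> ^ N \<le> 0" by (intro LIMSEQ_le_const) auto
  then show False using zero_less_power[OF \<delta>, of N] by linarith
qed

lemma P_N_Schur_if_biorth_sm_cond:
  assumes p: "1 < p" and N: "p / (p - 1) < real N"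
    and biorth: "\<And>y::nat \<Rightarrow> 'a::complex_normed_vector. normalized y \<Longrightarrow> weakly_null y \<Longrightarrow> biorth_sm_cond p y"
  shows "P_N_Schur TYPE('a) N"
  unfolding P_N_Schur_def
proof (intro allI impI)
  fix x :: "nat \<Rightarrow> 'a"
  assume null: "\<forall>P. hom_poly N P \<longrightarrow> (\<lambda>n. P (x n)) \<longlonglongrightarrow> 0"
  show "(\<lambda>n. norm (x n)) \<longlonglongrightarrow> 0"
  proof (rule norm_tendsto_zero_if_norming_polys)
    show "weakly_null x"
      using null one_le_if_conjugate_exponent_less[OF p N] by (intro weakly_null_if_poly_null)
    fix y :: "nat \<Rightarrow> 'a" assume "normalized y" "weakly_null y"
    then obtain P where "hom_poly N P" "norming_on_subseq N P y"
      using hom_poly_norming_on_subseq[OF p N] biorth by blast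
    then show "\<exists>N P. hom_poly N P \<and> norming_on_subseq N P y \<and> (\<lambda>n. P (x n)) \<longlonglongrightarrow> 0"
      using null by blast
  qed
qed

lemma P_Schur_if_biorth_sm_cond:
  assumes biorth: "\<And>y::nat \<Rightarrow> 'a::complex_normed_vector. normalized y \<Longrightarrow> weakly_null y \<Longrightarrow>
    \<exists>p>1. biorth_sm_cond p y"
  shows "P_Schur TYPE('a)"
  unfolding P_Schur_def
proof (intro allI impI)
  fix x :: "nat \<Rightarrow> 'a"
  assume null: "\<forall>M\<ge>1. \<forall>P. hom_poly M P \<longrightarrow> (\<lambda>n. P (x n)) \<longlonglongrightarrow> 0"
  show "(\<lambda>n. norm (x n)) \<longlonglongrightarrow> 0"
  proof (rule norm_tendsto_zero_if_norming_polys)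
    show "weakly_null x" using null by (intro weakly_null_if_poly_null[of 1]) auto
    fix y :: "nat \<Rightarrow> 'a" assume "normalized y" "weakly_null y"
    then obtain p where p: "1 < p" "biorth_sm_cond p y" using biorth by blast
    define N where "N = nat \<lceil>p / (p - 1)\<rceil> + 1"
    have N: "p / (p - 1) < real N" unfolding N_def by linarith
    obtain P where "hom_poly N P" "norming_on_subseq N P y"
      using hom_poly_norming_on_subseq[OF p(1) N p(2)] .
    then show "\<exists>N P. hom_poly N P \<and> norming_on_subseq N P y \<and> (\<lambda>n. P (x n)) \<longlonglongrightarrow> 0"
      using null one_le_if_conjugate_exponent_less[OF p(1) N] by blast
  qed
qed

theorem theorem3p3:
  shows "((\<forall>y::nat \<Rightarrow> 'a::{complex_normed_vector, banach}.
            normalized y \<and> weakly_null y \<longrightarrow> (\<exists>p>1. biorth_sm_cond p y))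
          \<longrightarrow> P_Schur TYPE('a))
       \<and> (\<forall>(p::real) (N::nat). p > 1 \<and> real N > p / (p - 1) \<and>
            (\<forall>y::nat \<Rightarrow> 'a. normalized y \<and> weakly_null y \<longrightarrow> biorth_sm_cond p y)
            \<longrightarrow> P_N_Schur TYPE('a) N)"
  using P_Schur_if_biorth_sm_cond P_N_Schur_if_biorth_sm_cond by blast

end
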